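(* Let $p \in \mathbb{R}\setminus\{0\}$, $q \in \mathbb{R}$, and $\Delta = \frac{q^2}{4} - p$. Let $\mathcal{A}_{p,q} = \{A \in S(4,\mathbb{R}) : \operatorname{Pf}(A) = p,\ \operatorname{s}(A) = q\}$, viewed as the subset $\{(a,b,c,d,e,f) \in \mathbb{R}^6 : af - be + cd = p,\ a + f = q\}$ of $\mathbb{R}^6$. Then: (1) if $\Delta < 0$, $\mathcal{A}_{p,q}$ is homeomorphic to $(\mathbb{R}^2 \setminus \{(0,0)\}) \times \mathbb{R}^2$; (2) if $\Delta > 0$, $\mathcal{A}_{p,q}$ is homeomorphic to $\mathbb{S}^2 \times \mathbb{R}^2$.
   Context: $S(4,\mathbb{R})$ is the set of invertible skew-symmetric real $4\times 4$ matrices; such a matrix is identified with $(a,b,c,d,e,f)\in\mathbb{R}^6$ via $A = \begin{bmatrix} 0 & a & b & c \\ -a & 0 & d & e \\ -b & -d & 0 & f \\ -c & -e & -f & 0\end{bmatrix}$, and $\operatorname{Pf}(A) = af - be + cd$, $\operatorname{s}(A) = a + f$. *)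

theory Defs
  imports "HOL-Analysis.Analysis"
begin

text \<open>Invertible skew-symmetric 4x4 real matrices, identified with vectors
(a,b,c,d,e,f) in R^6 (components 1..6). Pfaffian and the invariant s.\<close>

definition Pf6 :: "real^6 \<Rightarrow> real" where
  "Pf6 x = x$1 * x$6 - x$2 * x$5 + x$3 * x$4"

definition s6 :: "real^6 \<Rightarrow> real" where
  "s6 x = x$1 + x$6"

definition A_pq :: "real \<Rightarrow> real \<Rightarrow> (real^6) set" where
  "A_pq p q = {x. Pf6 x = p \<and> s6 x = q}"

end

theory Submission
  imports Defs
begin

text \<open>With t = (a - f)/2, u = (b + e)/2, w = (c - d)/2, v = (b - e)/2, z = (c + d)/2 one has
  Pf(A) = s(A)^2/4 - (t^2 + u^2 + w^2 - v^2 - z^2), and (t, u, w, v, z, s) are linear coordinates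
  on R^6. Hence the slice s = q of Pf = p is the hyperboloid |x|^2 - |y|^2 = \<Delta> in R^3 x R^2.
  For \<Delta> > 0 the map (x, y) \<mapsto> (x/|x|, y) identifies it with S^2 x R^2. For \<Delta> < 0, exchanging
  the roles of x and y gives S^1 x R^3 = (S^1 x R) x R^2, and polar coordinates with logarithmic
  radius identify S^1 x R with R^2 - {0}.\<close>

lemma homeomorphic_Times:
  assumes "S homeomorphic S'" and "T homeomorphic T'"
  shows "S \<times> T homeomorphic S' \<times> T'"
proof -
  obtain f f' where f: "homeomorphism S S' f f'"
    using assms(1) homeomorphic_def by blast
  obtain g g' where g: "homeomorphism T T' g g'"
    using assms(2) homeomorphic_def by blast
  have "homeomorphism (S \<times> T) (S' \<times> T')
      (\<lambda>z. (f (fst z), g (snd z))) (\<lambda>z. (f' (fst z), g' (snd z)))"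
    (is "homeomorphism _ _ ?h ?h'")
  proof (rule homeomorphismI)
    show "continuous_on (S \<times> T) ?h"
      by (intro continuous_on_Pair continuous_on_compose2[OF homeomorphism_cont1[OF f]]
          continuous_on_compose2[OF homeomorphism_cont1[OF g]]
          continuous_on_fst continuous_on_snd continuous_on_id) auto
    show "continuous_on (S' \<times> T') ?h'"
      by (intro continuous_on_Pair continuous_on_compose2[OF homeomorphism_cont2[OF f]]
          continuous_on_compose2[OF homeomorphism_cont2[OF g]]
          continuous_on_fst continuous_on_snd continuous_on_id) auto
    show "?h ` (S \<times> T) \<subseteq> S' \<times> T'"
      using homeomorphism_image1[OF f] homeomorphism_image1[OF g] by auto
    show "?h' ` (S' \<times> T') \<subseteq> S \<times> T"
      using homeomorphism_image2[OF f] homeomorphism_image2[OF g] by auto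
  qed (simp_all add: mem_Times_iff homeomorphism_apply1[OF f] homeomorphism_apply1[OF g]
      homeomorphism_apply2[OF f] homeomorphism_apply2[OF g])
  then show ?thesis
    unfolding homeomorphic_def by blast
qed

lemma homeomorphic_Times_assoc: "(S \<times> T) \<times> U homeomorphic S \<times> (T \<times> U)"
proof -
  have "homeomorphism ((S \<times> T) \<times> U) (S \<times> (T \<times> U))
      (\<lambda>z. (fst (fst z), snd (fst z), snd z)) (\<lambda>z. ((fst z, fst (snd z)), snd (snd z)))"
    by (rule homeomorphismI)
      (auto intro!: continuous_on_Pair continuous_on_fst continuous_on_snd continuous_on_id)
  then show ?thesis
    unfolding homeomorphic_def by blast
qed

lemma punctured_homeomorphic_sphere_Times_real:
  "(UNIV - {0::'a::real_normed_vector}) homeomorphic sphere (0::'a) 1 \<times> (UNIV :: real set)"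
proof -
  have "homeomorphism (UNIV - {0::'a}) (sphere 0 1 \<times> UNIV)
      (\<lambda>x. (sgn x, ln (norm x))) (\<lambda>z. exp (snd z) *\<^sub>R fst z)"
  proof (rule homeomorphismI)
    show "continuous_on (UNIV - {0::'a}) (\<lambda>x. (sgn x, ln (norm x)))"
      by (intro continuous_intros) auto
    show "continuous_on (sphere 0 1 \<times> UNIV) (\<lambda>z. exp (snd z) *\<^sub>R (fst z :: 'a))"
      by (intro continuous_intros)
  qed (auto simp: norm_sgn sgn_scaleR sgn_div_norm)
  then show ?thesis
    unfolding homeomorphic_def by blast
qed

definition hyperboloid :: "real \<Rightarrow> ('a::real_normed_vector \<times> 'b::real_normed_vector) set" where
  "hyperboloid d = {z. norm (fst z) ^ 2 - norm (snd z) ^ 2 = d}"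

lemma hyperboloid_homeomorphic_swap:
  "(hyperboloid d :: ('a::real_normed_vector \<times> 'b::real_normed_vector) set)
     homeomorphic (hyperboloid (- d) :: ('b \<times> 'a) set)"
proof -
  have "homeomorphism (hyperboloid d :: ('a \<times> 'b) set) (hyperboloid (- d)) prod.swap prod.swap"
    by (rule homeomorphismI) (auto simp: hyperboloid_def intro: continuous_on_swap)
  then show ?thesis
    unfolding homeomorphic_def by blast
qed

lemma hyperboloid_homeomorphic_sphere_Times:
  assumes "d > 0"
  shows "(hyperboloid d :: ('a::real_normed_vector \<times> 'b::real_normed_vector) set)
           homeomorphic sphere (0::'a) 1 \<times> (UNIV :: 'b set)"
proof -
  define r where "r y = sqrt (d + norm y ^ 2)" for y :: 'b
  have r_pos: "r y > 0" for y
    using assms by (simp add: r_def add_pos_nonneg)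
  have norm_fst: "norm (fst z) = r (snd z)" if "z \<in> hyperboloid d" for z :: "'a \<times> 'b"
    using that
    by (simp add: hyperboloid_def r_def algebra_simps flip: real_sqrt_eq_iff[of "norm (fst z) ^ 2"])
  have fst_nonzero: "fst z \<noteq> 0" if "z \<in> hyperboloid d" for z :: "'a \<times> 'b"
    using norm_fst[OF that] r_pos[of "snd z"] by auto
  have "homeomorphism (hyperboloid d :: ('a \<times> 'b) set) (sphere 0 1 \<times> UNIV)
      (\<lambda>z. (sgn (fst z), snd z)) (\<lambda>z. (r (snd z) *\<^sub>R fst z, snd z))"
    (is "homeomorphism ?H ?S ?f ?g")
  proof (rule homeomorphismI)
    show "continuous_on ?H ?f"
      using fst_nonzero by (intro continuous_intros) auto
    show "continuous_on ?S ?g"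
      unfolding r_def by (intro continuous_intros)
    show "?f ` ?H \<subseteq> ?S"
      using fst_nonzero by (auto simp: norm_sgn)
    show "?g ` ?S \<subseteq> ?H"
      using r_pos by (auto simp: hyperboloid_def r_def power_mult_distrib less_imp_le add_pos_nonneg)
    show "?g (?f z) = z" if "z \<in> ?H" for z
      using norm_fst[OF that] r_pos[of "snd z"] by (auto simp: sgn_div_norm)
    show "?f (?g z) = z" if "z \<in> ?S" for z
      using that r_pos[of "snd z"] by (auto simp: sgn_scaleR sgn_div_norm)
  qed
  then show ?thesis
    unfolding homeomorphic_def by blast
qed

lemma hyperboloid_homeomorphic_punctured_Times:
  assumes "d < 0" and "DIM('a) = Suc DIM('c)"
  shows "(hyperboloid d :: ('a::euclidean_space \<times> 'b::real_normed_vector) set)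
           homeomorphic (UNIV - {0::'b}) \<times> (UNIV :: 'c::euclidean_space set)"
proof -
  have "(hyperboloid d :: ('a \<times> 'b) set) homeomorphic (hyperboloid (- d) :: ('b \<times> 'a) set)"
    by (rule hyperboloid_homeomorphic_swap)
  also have "\<dots> homeomorphic sphere (0::'b) 1 \<times> (UNIV :: 'a set)"
    using assms(1) by (intro hyperboloid_homeomorphic_sphere_Times) simp
  also have "\<dots> homeomorphic sphere (0::'b) 1 \<times> ((UNIV :: real set) \<times> (UNIV :: 'c set))"
    using assms(2) by (intro homeomorphic_Times homeomorphic_refl) (simp add: homeomorphic_UNIV_UNIV)
  also have "\<dots> homeomorphic (sphere (0::'b) 1 \<times> (UNIV :: real set)) \<times> (UNIV :: 'c set)"
    using homeomorphic_Times_assoc homeomorphic_sym by blast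
  also have "\<dots> homeomorphic (UNIV - {0::'b}) \<times> (UNIV :: 'c set)"
    using punctured_homeomorphic_sphere_Times_real homeomorphic_sym
    by (intro homeomorphic_Times homeomorphic_refl) blast
  finally show ?thesis .
qed

lemma exhaust_6:
  fixes x :: 6
  shows "x = 1 \<or> x = 2 \<or> x = 3 \<or> x = 4 \<or> x = 5 \<or> x = 6"
proof (induct x)
  case (of_int z)
  then have "z = 0 \<or> z = 1 \<or> z = 2 \<or> z = 3 \<or> z = 4 \<or> z = 5"
    by fastforce
  then show ?case
    by auto
qed

lemma forall_6: "(\<forall>i::6. P i) \<longleftrightarrow> P 1 \<and> P 2 \<and> P 3 \<and> P 4 \<and> P 5 \<and> P 6"
  by (metis exhaust_6)

lemma continuous_on_componentwise:
  assumes "\<And>i. continuous_on S (\<lambda>x. f x $ i)"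
  shows "continuous_on S f"
  using continuous_on_vec_lambda[of S "\<lambda>i x. f x $ i", OF assms] by simp

lemma continuous_on_vector_2 [continuous_intros]:
  assumes "continuous_on S f1" "continuous_on S f2"
  shows "continuous_on S (\<lambda>x. vector [f1 x, f2 x] :: real^2)"
proof (rule continuous_on_componentwise)
  fix i :: 2
  show "continuous_on S (\<lambda>x. (vector [f1 x, f2 x] :: real^2) $ i)"
    using exhaust_2[of i] assms by (elim disjE) simp_all
qed

lemma continuous_on_vector_3 [continuous_intros]:
  assumes "continuous_on S f1" "continuous_on S f2" "continuous_on S f3"
  shows "continuous_on S (\<lambda>x. vector [f1 x, f2 x, f3 x] :: real^3)"
proof (rule continuous_on_componentwise)
  fix i :: 3
  show "continuous_on S (\<lambda>x. (vector [f1 x, f2 x, f3 x] :: real^3) $ i)"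
    using exhaust_3[of i] assms by (elim disjE) simp_all
qed

lemma continuous_on_vector_6 [continuous_intros]:
  assumes "continuous_on S f1" "continuous_on S f2" "continuous_on S f3"
    and "continuous_on S f4" "continuous_on S f5" "continuous_on S f6"
  shows "continuous_on S (\<lambda>x. vector [f1 x, f2 x, f3 x, f4 x, f5 x, f6 x] :: real^6)"
proof (rule continuous_on_componentwise)
  fix i :: 6
  show "continuous_on S (\<lambda>x. (vector [f1 x, f2 x, f3 x, f4 x, f5 x, f6 x] :: real^6) $ i)"
    using exhaust_6[of i] assms by (elim disjE) (simp_all add: vector_def)
qed

lemma power2_norm_vec_2: "norm (x::real^2) ^ 2 = x$1 ^ 2 + x$2 ^ 2"
  by (simp add: norm_vec_def L2_set_def sum_2)

lemma power2_norm_vec_3: "norm (x::real^3) ^ 2 = x$1 ^ 2 + x$2 ^ 2 + x$3 ^ 2"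
  by (simp add: norm_vec_def L2_set_def sum_3)

definition pfaffian_coords :: "real^6 \<Rightarrow> (real^3) \<times> (real^2)" where
  "pfaffian_coords x =
     (vector [(x$1 - x$6) / 2, (x$2 + x$5) / 2, (x$3 - x$4) / 2],
      vector [(x$2 - x$5) / 2, (x$3 + x$4) / 2])"

lemma pfaffian_coords_in_hyperboloid:
  "pfaffian_coords x \<in> hyperboloid (s6 x ^ 2 / 4 - Pf6 x)"
  unfolding hyperboloid_def pfaffian_coords_def mem_Collect_eq fst_conv snd_conv
    power2_norm_vec_2 power2_norm_vec_3
  by (simp add: Pf6_def s6_def power2_eq_square field_simps)

lemma A_pq_homeomorphic_hyperboloid:
  "A_pq p q homeomorphic (hyperboloid (q^2 / 4 - p) :: ((real^3) \<times> (real^2)) set)"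
proof -
  define g where "g z = (vector [q/2 + fst z$1, fst z$2 + snd z$1, fst z$3 + snd z$2,
                                 snd z$2 - fst z$3, fst z$2 - snd z$1, q/2 - fst z$1] :: real^6)"
    for z :: "(real^3) \<times> (real^2)"
  have s6_g: "s6 (g z) = q" for z
    by (simp add: g_def s6_def vector_def)
  have coords_g: "pfaffian_coords (g z) = z" for z
    by (simp add: g_def pfaffian_coords_def vector_def prod_eq_iff vec_eq_iff forall_2 forall_3)
  have g_coords: "g (pfaffian_coords x) = x" if "s6 x = q" for x
    using that
    by (simp add: g_def pfaffian_coords_def s6_def vector_def vec_eq_iff forall_6 field_simps)
  have level: "Pf6 x = p \<longleftrightarrow> pfaffian_coords x \<in> hyperboloid (q^2 / 4 - p)" if "s6 x = q" for x
    using pfaffian_coords_in_hyperboloid[of x] that by (auto simp: hyperboloid_def)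
  have "homeomorphism (A_pq p q) (hyperboloid (q^2 / 4 - p)) pfaffian_coords g"
  proof (rule homeomorphismI)
    show "continuous_on (A_pq p q) pfaffian_coords"
      unfolding pfaffian_coords_def by (intro continuous_intros) auto
    show "continuous_on (hyperboloid (q^2 / 4 - p)) g"
      unfolding g_def by (intro continuous_intros)
    show "pfaffian_coords ` A_pq p q \<subseteq> hyperboloid (q^2 / 4 - p)"
      using level unfolding A_pq_def by blast
    show "g ` hyperboloid (q^2 / 4 - p) \<subseteq> A_pq p q"
      using level[OF s6_g] s6_g coords_g by (auto simp: A_pq_def)
    show "g (pfaffian_coords x) = x" if "x \<in> A_pq p q" for x
      using that g_coords by (simp add: A_pq_def)
  qed (rule coords_g)
  then show ?thesis
    unfolding homeomorphic_def by blast
qed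

theorem theorem2p3:
  fixes p q :: real
  assumes "p \<noteq> 0"
  shows "(q\<^sup>2 / 4 - p < 0 \<longrightarrow>
            A_pq p q homeomorphic ((UNIV - {0::real^2}) \<times> (UNIV :: (real^2) set)))
       \<and> (q\<^sup>2 / 4 - p > 0 \<longrightarrow>
            A_pq p q homeomorphic (sphere (0::real^3) 1 \<times> (UNIV :: (real^2) set)))"
proof -
  have A: "A_pq p q homeomorphic (hyperboloid (q\<^sup>2 / 4 - p) :: ((real^3) \<times> (real^2)) set)"
    by (rule A_pq_homeomorphic_hyperboloid)
  show ?thesis
  proof (intro conjI impI)
    assume "q\<^sup>2 / 4 - p < 0"
    then have "(hyperboloid (q\<^sup>2 / 4 - p) :: ((real^3) \<times> (real^2)) set)
        homeomorphic (UNIV - {0::real^2}) \<times> (UNIV :: (real^2) set)"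
      by (rule hyperboloid_homeomorphic_punctured_Times) simp
    with A show "A_pq p q homeomorphic (UNIV - {0::real^2}) \<times> (UNIV :: (real^2) set)"
      by (rule homeomorphic_trans)
  next
    assume "q\<^sup>2 / 4 - p > 0"
    then have "(hyperboloid (q\<^sup>2 / 4 - p) :: ((real^3) \<times> (real^2)) set)
        homeomorphic sphere (0::real^3) 1 \<times> (UNIV :: (real^2) set)"
      by (rule hyperboloid_homeomorphic_sphere_Times)
    with A show "A_pq p q homeomorphic sphere (0::real^3) 1 \<times> (UNIV :: (real^2) set)"
      by (rule homeomorphic_trans)
  qed
qed

end
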